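(* Let $m\in\mathbb{N}$, $r\in\{1,\dots,m\}$, and let $v$ be a vertex of $D_m$ of generation number $r$. Then the set $\{x\in V(D_m): d_{D_m}(x,v)\le 2^{r-1}\}$ is contained in a subdiamond of $D_m$ of height $2^r$.
   Context: Diamonds: $D_0$ is an edge; $D_i$ is obtained from $D_{i-1}$ by replacing each edge $uv$ by a quadrilateral $u,a,v,b$; $D_m$ has the shortest path metric with unit edges. Generation number $r$ ($1\le r\le m$) consists of the vertices of $D_{m-r+1}$ not belonging to $D_{m-r}$ (so generation $1$ are the vertices added in the last step; the two vertices of $D_0$ belong to no generation). A subdiamond of $D_m$ is the set of vertices that evolved from a single edge $e$ of some $D_j$, $0\le j\le m$, including the endpoints of $e$ (its top and bottom); its height is the distance between top and bottom, $2^{m-j}$. *)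

theory Defs
  imports Main
begin

text \<open>New w s is one of the two new vertices (a for s = False, b for s = True) created
  when the edge labelled w (an edge of D_j with j = length w) is replaced by a quadrilateral.\<close>
datatype dvert = Top | Bot | New "nat list" bool

fun dedges :: "nat \<Rightarrow> (nat list \<times> dvert \<times> dvert) set" where
  "dedges 0 = {([], Bot, Top)}"
| "dedges (Suc j) = (\<Union>(w, u, v) \<in> dedges j.
     {(w @ [0], u, New w False), (w @ [1], New w False, v),
      (w @ [2], u, New w True), (w @ [3], New w True, v)})"

definition dverts :: "nat \<Rightarrow> dvert set" where
  "dverts j = {x. \<exists>w u v. (w, u, v) \<in> dedges j \<and> (x = u \<or> x = v)}"

definition dadj :: "nat \<Rightarrow> dvert \<Rightarrow> dvert \<Rightarrow> bool" where
  "dadj m x y \<longleftrightarrow> (\<exists>w. (w, x, y) \<in> dedges m \<or> (w, y, x) \<in> dedges m)"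

definition dwalk :: "nat \<Rightarrow> dvert list \<Rightarrow> bool" where
  "dwalk m p \<longleftrightarrow> p \<noteq> [] \<and> set p \<subseteq> dverts m \<and>
     (\<forall>i. Suc i < length p \<longrightarrow> dadj m (p ! i) (p ! Suc i))"

definition ddist :: "nat \<Rightarrow> dvert \<Rightarrow> dvert \<Rightarrow> nat" where
  "ddist m x y = (LEAST n. \<exists>p. dwalk m p \<and> hd p = x \<and> last p = y \<and> length p = Suc n)"

definition generation :: "nat \<Rightarrow> nat \<Rightarrow> dvert \<Rightarrow> bool" where
  "generation m r x \<longleftrightarrow> 1 \<le> r \<and> r \<le> m \<and>
     x \<in> dverts (m - r + 1) \<and> x \<notin> dverts (m - r)"

definition subdiamond_set :: "nat \<Rightarrow> nat list \<Rightarrow> dvert set" where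
  "subdiamond_set m w = {x. \<exists>w' a b. (w', a, b) \<in> dedges m \<and> (\<exists>z. w' = w @ z) \<and> (x = a \<or> x = b)}"

definition is_subdiamond :: "nat \<Rightarrow> dvert set \<Rightarrow> nat \<Rightarrow> bool" where
  "is_subdiamond m S h \<longleftrightarrow> (\<exists>j w u v. j \<le> m \<and> (w, u, v) \<in> dedges j \<and>
      S = subdiamond_set m w \<and> h = 2 ^ (m - j))"

end

theory Submission
  imports Defs
begin

text \<open>Give every vertex of \<open>D\<^sub>m\<close> its height, the distance from \<open>Bot\<close>; the vertex \<open>v\<close>
  is the midpoint of the subdiamond \<open>S\<close> of height \<open>2^r\<close> created together with it. The function
  that equals \<open>2^(r-1)\<close> minus the height difference to \<open>v\<close> on \<open>S\<close> and \<open>-1\<close> outside is 1-Lipschitz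
  along edges, because an edge leaves \<open>S\<close> only at its top or bottom, where the function is \<open>0\<close>.
  Hence every vertex outside \<open>S\<close> has distance at least \<open>2^(r-1) + 1\<close> from \<open>v\<close>.\<close>

abbreviation quadrilateral_edges ::
    "nat list \<Rightarrow> dvert \<Rightarrow> dvert \<Rightarrow> (nat list \<times> dvert \<times> dvert) set" where
  "quadrilateral_edges w u v \<equiv> {(w @ [0], u, New w False), (w @ [1], New w False, v),
                                (w @ [2], u, New w True), (w @ [3], New w True, v)}"

lemma dedges_SucE:
  assumes "(w', a, b) \<in> dedges (Suc n)"
  obtains w u v where "(w, u, v) \<in> dedges n"
    and "(w', a, b) \<in> quadrilateral_edges w u v"
  using assms by auto

lemma dedges_SucI:
  assumes "(w, u, v) \<in> dedges n"
  shows "(w @ [0], u, New w False) \<in> dedges (Suc n)" "(w @ [1], New w False, v) \<in> dedges (Suc n)"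
    "(w @ [2], u, New w True) \<in> dedges (Suc n)" "(w @ [3], New w True, v) \<in> dedges (Suc n)"
  using assms by (auto intro!: bexI[of _ "(w, u, v)"])

lemma length_dedges_label: "(w, a, b) \<in> dedges n \<Longrightarrow> length w = n"
  by (induction n arbitrary: w a b) (auto elim: dedges_SucE)

lemma dedges_label_unique:
  "(w, a, b) \<in> dedges n \<Longrightarrow> (w, a', b') \<in> dedges n \<Longrightarrow> a = a' \<and> b = b'"
proof (induction n arbitrary: w a b a' b')
  case (Suc n)
  obtain w1 u1 v1 where e1: "(w1, u1, v1) \<in> dedges n"
    and c1: "(w, a, b) \<in> quadrilateral_edges w1 u1 v1"
    using Suc.prems(1) by (rule dedges_SucE)
  obtain w2 u2 v2 where e2: "(w2, u2, v2) \<in> dedges n"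
    and c2: "(w, a', b') \<in> quadrilateral_edges w2 u2 v2"
    using Suc.prems(2) by (rule dedges_SucE)
  have "w1 = w2" using c1 c2 by auto
  with Suc.IH[OF e1] e2 c1 c2 show ?case by auto
qed simp

lemma dedges_endpoint_New:
  "(w, a, b) \<in> dedges n \<Longrightarrow> New p s \<in> {a, b} \<Longrightarrow> \<exists>z. z \<noteq> [] \<and> w = p @ z"
proof (induction n arbitrary: w a b)
  case (Suc n)
  from Suc.prems(1) obtain w1 u1 v1 where "(w1, u1, v1) \<in> dedges n"
    and "(w, a, b) \<in> quadrilateral_edges w1 u1 v1"
    by (rule dedges_SucE)
  with Suc.IH Suc.prems(2) show ?case by fastforce
qed simp

lemma dedges_descendant_endpoint:
  assumes "(w, u, v) \<in> dedges j"
  shows "(w @ z, a, b) \<in> dedges n \<Longrightarrow> x \<in> {a, b} \<Longrightarrow> x \<in> {u, v} \<or> (\<exists>q s. x = New (w @ q) s)"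
proof (induction z arbitrary: n a b rule: rev_induct)
  case Nil
  then have "n = j" using length_dedges_label[OF Nil.prems(1)] length_dedges_label[OF assms] by simp
  with Nil dedges_label_unique[OF assms] show ?case by auto
next
  case (snoc c z)
  obtain n' where n: "n = Suc n'"
    using length_dedges_label[OF snoc.prems(1)] by (cases n) auto
  from snoc.prems(1)[unfolded n] obtain w1 u1 v1 where e1: "(w1, u1, v1) \<in> dedges n'"
    and c1: "(w @ z @ [c], a, b) \<in> quadrilateral_edges w1 u1 v1"
    by (rule dedges_SucE)
  then have "w1 = w @ z" by auto
  with e1 have "(w @ z, u1, v1) \<in> dedges n'" by simp
  moreover have "x \<in> {u1, v1} \<or> (\<exists>s. x = New (w @ z) s)"
    using c1 snoc.prems(2) \<open>w1 = w @ z\<close> by auto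
  ultimately show ?case using snoc.IH by blast
qed

lemma dedges_upper_descendant:
  "(w, a, b) \<in> dedges n \<Longrightarrow> \<exists>a'. (w @ replicate d 1, a', b) \<in> dedges (n + d)"
proof (induction d)
  case (Suc d)
  then obtain a' where "(w @ replicate d 1, a', b) \<in> dedges (n + d)" by blast
  from dedges_SucI(2)[OF this] show ?case
    by (metis add_Suc_right append_assoc replicate_Suc replicate_append_same)
qed (simp, blast)

lemma subdiamond_set_cases:
  assumes "(w, u, v) \<in> dedges j" and "x \<in> subdiamond_set m w"
  shows "x \<in> {u, v} \<or> (\<exists>q s. x = New (w @ q) s)"
proof -
  from assms(2) obtain z a b where "(w @ z, a, b) \<in> dedges m" and "x \<in> {a, b}"
    unfolding subdiamond_set_def by blast
  then show ?thesis by (rule dedges_descendant_endpoint[OF assms(1)])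
qed

lemma New_mem_subdiamond_set:
  assumes "(w, u, v) \<in> dedges j" and "j < m"
  shows "New w s \<in> subdiamond_set m w"
proof -
  have "(w @ [if s then 2 else 0], u, New w s) \<in> dedges (Suc j)"
    using dedges_SucI(1,3)[OF assms(1)] by (cases s) auto
  from dedges_upper_descendant[OF this, of "m - Suc j"] assms(2)
  show ?thesis unfolding subdiamond_set_def by fastforce
qed

lemma subdiamond_boundary:
  assumes "(w, u, v) \<in> dedges j" and "x \<in> subdiamond_set m w"
    and "(w', a, b) \<in> dedges m" and "x \<in> {a, b}" and "\<not> (\<exists>z. w' = w @ z)"
  shows "x \<in> {u, v}"
proof -
  have "x \<noteq> New (w @ q) s" for q s
    using dedges_endpoint_New[OF assms(3)] assms(4,5) by fastforce
  then show ?thesis using subdiamond_set_cases[OF assms(1,2)] by blast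
qed

lemma generation_New:
  assumes "generation m r v"
  obtains w u t s where "(w, u, t) \<in> dedges (m - r)" and "v = New w s"
proof -
  have v1: "v \<in> dverts (Suc (m - r))" and v0: "v \<notin> dverts (m - r)"
    using assms unfolding generation_def by auto
  from v1 obtain w' a b where e': "(w', a, b) \<in> dedges (Suc (m - r))" and "v \<in> {a, b}"
    unfolding dverts_def by blast
  from e' obtain w u t where e: "(w, u, t) \<in> dedges (m - r)" and "(w', a, b) \<in> quadrilateral_edges w u t"
    by (rule dedges_SucE)
  moreover have "u \<in> dverts (m - r)" "t \<in> dverts (m - r)"
    using e unfolding dverts_def by blast+
  ultimately show ?thesis using that \<open>v \<in> {a, b}\<close> v0 by blast
qed

lemma power2_diff_halves: "n < m \<Longrightarrow> (2::nat) ^ (m - n) = 2 ^ (m - n - 1) + 2 ^ (m - n - 1)"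
  by (cases "m - n") auto

text \<open>\<open>edge_base m w\<close> is the height in \<open>D\<^sub>m\<close> of the bottom endpoint of the edge labelled \<open>w\<close>:
  the letters 1 and 3 select the upper half of the current subdiamond.\<close>

fun edge_base :: "nat \<Rightarrow> nat list \<Rightarrow> nat" where
  "edge_base k [] = 0"
| "edge_base k (c # w) = (if odd c then 2 ^ (k - 1) else 0) + edge_base (k - 1) w"

lemma edge_base_snoc:
  "edge_base k (w @ [c]) = edge_base k w + (if odd c then 2 ^ (k - length w - 1) else 0)"
  by (induction w arbitrary: k) (auto simp: diff_diff_add)

fun height :: "nat \<Rightarrow> dvert \<Rightarrow> nat" where
  "height m Bot = 0"
| "height m Top = 2 ^ m"
| "height m (New w s) = edge_base m w + 2 ^ (m - length w - 1)"

lemma height_dedges: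
  "(w, a, b) \<in> dedges n \<Longrightarrow> n \<le> m \<Longrightarrow>
     height m a = edge_base m w \<and> height m b = edge_base m w + 2 ^ (m - n)"
proof (induction n arbitrary: w a b)
  case (Suc n)
  from Suc.prems(1) obtain w1 u1 v1 where e1: "(w1, u1, v1) \<in> dedges n" and "(w, a, b) \<in> quadrilateral_edges w1 u1 v1"
    by (rule dedges_SucE)
  moreover have "(2::nat) ^ (m - n) = 2 ^ (m - Suc n) + 2 ^ (m - Suc n)"
    using power2_diff_halves[of n m] Suc.prems(2) by simp
  ultimately show ?case
    using Suc.IH[OF e1] Suc.prems(2) length_dedges_label[OF e1] by (auto simp: edge_base_snoc)
qed simp

lemma dedges_endpoints_connected:
  "(w, a, b) \<in> dedges n \<Longrightarrow> n \<le> m \<Longrightarrow> (dadj m)\<^sup>*\<^sup>* a b"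
proof (induction "m - n" arbitrary: n w a b)
  case 0
  then show ?case unfolding dadj_def by auto
next
  case (Suc d)
  have "(dadj m)\<^sup>*\<^sup>* a (New w False)" "(dadj m)\<^sup>*\<^sup>* (New w False) b"
    using Suc.hyps(1)[of "Suc n"] Suc.hyps(2) dedges_SucI(1,2)[OF Suc.prems(1)] by auto
  then show ?case by simp
qed

lemma dedges_endpoints_connected_Bot:
  "(w, a, b) \<in> dedges n \<Longrightarrow> n \<le> m \<Longrightarrow> (dadj m)\<^sup>*\<^sup>* Bot a \<and> (dadj m)\<^sup>*\<^sup>* Bot b"
proof (induction n arbitrary: w a b)
  case 0
  then show ?case using dedges_endpoints_connected[of "[]" Bot Top 0 m] by auto
next
  case (Suc n)
  from Suc.prems(1) obtain w1 u1 v1 where e1: "(w1, u1, v1) \<in> dedges n" and "(w, a, b) \<in> quadrilateral_edges w1 u1 v1"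
    by (rule dedges_SucE)
  moreover have "(dadj m)\<^sup>*\<^sup>* u1 (New w1 False)" "(dadj m)\<^sup>*\<^sup>* u1 (New w1 True)"
    using dedges_endpoints_connected[OF dedges_SucI(1)[OF e1]]
      dedges_endpoints_connected[OF dedges_SucI(3)[OF e1]] Suc.prems(2) by auto
  ultimately show ?case using Suc.IH[OF e1] Suc.prems(2) by (auto intro: rtranclp_trans)
qed

lemma symp_dadj: "symp (dadj m)"
  unfolding dadj_def by (auto intro: sympI)

lemma dverts_connected:
  assumes "x \<in> dverts m" and "y \<in> dverts m"
  shows "(dadj m)\<^sup>*\<^sup>* x y"
proof -
  have "(dadj m)\<^sup>*\<^sup>* Bot z" if "z \<in> dverts m" for z
    using that dedges_endpoints_connected_Bot unfolding dverts_def by blast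
  with assms show ?thesis
    using sympD[OF symp_rtranclp[OF symp_dadj]] by (blast intro: rtranclp_trans)
qed

lemma dadj_dverts: "dadj m a b \<Longrightarrow> a \<in> dverts m \<and> b \<in> dverts m"
  unfolding dadj_def dverts_def by blast

lemma rtranclp_dadj_dwalk:
  "(dadj m)\<^sup>*\<^sup>* x y \<Longrightarrow> x \<in> dverts m \<Longrightarrow> \<exists>p. dwalk m p \<and> hd p = x \<and> last p = y"
proof (induction rule: converse_rtranclp_induct)
  case base
  then show ?case by (intro exI[of _ "[y]"]) (auto simp: dwalk_def)
next
  case (step x z)
  then obtain p where p: "dwalk m p" "hd p = z" "last p = y" using dadj_dverts by blast
  have "dadj m ((x # p) ! i) ((x # p) ! Suc i)" if "Suc i < length (x # p)" for i
    using p step.hyps(1) that unfolding dwalk_def by (cases i) (auto simp: hd_conv_nth)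
  with p step.prems show ?case unfolding dwalk_def by (intro exI[of _ "x # p"]) auto
qed

lemma ddist_shortest_walk:
  assumes "x \<in> dverts m" and "y \<in> dverts m"
  obtains p where "dwalk m p" "hd p = x" "last p = y" "length p = Suc (ddist m x y)"
proof -
  obtain p where "dwalk m p" "hd p = x" "last p = y"
    using rtranclp_dadj_dwalk dverts_connected assms by blast
  then have "\<exists>n p. dwalk m p \<and> hd p = x \<and> last p = y \<and> length p = Suc n"
    unfolding dwalk_def by (intro exI[of _ "length p - 1"] exI[of _ p]) auto
  from LeastI_ex[OF this] that show ?thesis unfolding ddist_def by blast
qed

lemma dwalk_Lipschitz:
  fixes g :: "dvert \<Rightarrow> int"
  assumes "dwalk m p" and "\<And>a b. dadj m a b \<Longrightarrow> \<bar>g a - g b\<bar> \<le> 1" and "i < length p"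
  shows "\<bar>g (p ! 0) - g (p ! i)\<bar> \<le> int i"
  using assms(3)
proof (induction i)
  case (Suc i)
  have "\<bar>g (p ! i) - g (p ! Suc i)\<bar> \<le> 1"
    using assms(1,2) Suc.prems unfolding dwalk_def by auto
  with Suc show ?case by auto
qed simp

lemma ddist_ge_Lipschitz:
  fixes g :: "dvert \<Rightarrow> int"
  assumes "\<And>a b. dadj m a b \<Longrightarrow> \<bar>g a - g b\<bar> \<le> 1"
    and "x \<in> dverts m" and "y \<in> dverts m"
  shows "\<bar>g x - g y\<bar> \<le> int (ddist m x y)"
proof -
  obtain p where p: "dwalk m p" "hd p = x" "last p = y" "length p = Suc (ddist m x y)"
    using ddist_shortest_walk assms(2,3) .
  then have "p \<noteq> []" unfolding dwalk_def by simp
  with p have "p ! 0 = x" "p ! ddist m x y = y" by (auto simp: hd_conv_nth last_conv_nth)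
  with dwalk_Lipschitz[OF p(1) assms(1), where i = "ddist m x y"] p(4) show ?thesis by simp
qed

definition tent :: "nat \<Rightarrow> nat list \<Rightarrow> dvert \<Rightarrow> int" where
  "tent m w x = (if x \<in> subdiamond_set m w
     then 2 ^ (m - length w - 1) - \<bar>int (height m x) - int (height m (New w False))\<bar> else -1)"

lemma tent_Lipschitz:
  assumes e: "(w, u, t) \<in> dedges j" and "j < m" and "dadj m a b"
  shows "\<bar>tent m w a - tent m w b\<bar> \<le> 1"
proof -
  let ?S = "subdiamond_set m w"
  have len: "length w = j" using length_dedges_label[OF e] .
  have tent_top_bot: "tent m w x = 0" if "x \<in> {u, t}" and "x \<in> ?S" for x
    using that height_dedges[OF e] power2_diff_halves[OF \<open>j < m\<close>] \<open>j < m\<close> len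
    unfolding tent_def by auto
  have "\<bar>tent m w a - tent m w b\<bar> \<le> 1" if ed: "(w', a, b) \<in> dedges m" for w' a b
  proof (cases "a \<in> ?S \<and> b \<in> ?S")
    case True
    then show ?thesis using height_dedges[OF ed] unfolding tent_def by auto
  next
    case False
    then have "\<not> (\<exists>z. w' = w @ z)" using ed unfolding subdiamond_set_def by blast
    then have "x \<in> ?S \<Longrightarrow> x \<in> {a, b} \<Longrightarrow> tent m w x = 0" for x
      using subdiamond_boundary[OF e _ ed] tent_top_bot by blast
    with False show ?thesis unfolding tent_def by auto
  qed
  with assms(3) show ?thesis unfolding dadj_def by (metis abs_minus_commute)
qed

theorem mainTheorem9:
  fixes m r :: nat and v :: dvert
  assumes "1 \<le> r" and "r \<le> m" and "v \<in> dverts m" and "generation m r v"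
  shows "\<exists>S. is_subdiamond m S (2 ^ r) \<and>
           {x \<in> dverts m. ddist m x v \<le> 2 ^ (r - 1)} \<subseteq> S"
proof -
  obtain w u t s where e: "(w, u, t) \<in> dedges (m - r)" and v: "v = New w s"
    using assms(4) by (rule generation_New)
  let ?S = "subdiamond_set m w"
  have "m - r < m" using assms(1,2) by simp
  have "is_subdiamond m ?S (2 ^ r)"
    unfolding is_subdiamond_def using e assms(2)
    by (intro exI[of _ "m - r"] exI[of _ w] exI[of _ u] exI[of _ t]) simp
  moreover have "x \<in> ?S" if "x \<in> dverts m" and "ddist m x v \<le> 2 ^ (r - 1)" for x
  proof (rule ccontr)
    assume "x \<notin> ?S"
    then have "tent m w x = -1" unfolding tent_def by simp
    moreover have "tent m w v = 2 ^ (r - 1)"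
      using New_mem_subdiamond_set[OF e \<open>m - r < m\<close>] length_dedges_label[OF e] assms(2) v
      unfolding tent_def by simp
    moreover have "\<bar>tent m w x - tent m w v\<bar> \<le> int (ddist m x v)"
      using ddist_ge_Lipschitz[OF tent_Lipschitz[OF e \<open>m - r < m\<close>] that(1) assms(3)] .
    moreover have "int (ddist m x v) \<le> 2 ^ (r - 1)"
      using that(2) by (metis of_nat_le_iff of_nat_numeral of_nat_power)
    ultimately show False by linarith
  qed
  ultimately show ?thesis by blast
qed

end
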